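(* Let $G\subseteq G'$ and $H$ be finite simple graphs ($G$ a subgraph of $G'$) such that $\mathrm{Hom}(G,H)$ is nonempty and disconnected. Let $\eta_1,\eta_2$ be 0-cells of $\mathrm{Hom}(G,H)$ (i.e. graph homomorphisms $G\to H$) lying in distinct connected components of $\mathrm{Hom}(G,H)$. If there are cells $\overline{\eta_1},\overline{\eta_2}\in\mathrm{Hom}(G',H)$ with $\overline{\eta_i}|_{V(G)}=\eta_i$ for $i\in\{1,2\}$, then $\mathrm{Hom}(G',H)$ is also disconnected.
   Context: For graphs $G,H$, the homomorphism complex $\mathrm{Hom}(G,H)$ is the polyhedral complex whose cells are functions $\eta:V(G)\to 2^{V(H)}\setminus\{\varnothing\}$ such that whenever $\{x,y\}\in E(G)$ we have $\eta(x)\times\eta(y)\subseteq E(H)$; the cell $\eta$ is a product of simplices of dimension $\sum_{v}(|\eta(v)|-1)$, with face relation $\eta\subseteq\tau$ iff $\eta(v)\subseteq\tau(v)$ for all $v$. A 0-cell $\eta$ (a homomorphism, written with singleton values) is identified with the function assigning the singleton $\eta(v)$. Disconnected means nonempty with more than one path component. *)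

theory Defs
  imports Main
begin

definition simple_graph :: "'a set \<Rightarrow> 'a set set \<Rightarrow> bool" where
  "simple_graph V E \<longleftrightarrow> finite V \<and> (\<forall>e\<in>E. \<exists>x y. x \<noteq> y \<and> x \<in> V \<and> y \<in> V \<and> e = {x, y})"

definition subgraph :: "'a set \<Rightarrow> 'a set set \<Rightarrow> 'a set \<Rightarrow> 'a set set \<Rightarrow> bool" where
  "subgraph V E V' E' \<longleftrightarrow> V \<subseteq> V' \<and> E \<subseteq> E'"

definition hom_cell :: "'a set \<Rightarrow> 'a set set \<Rightarrow> 'b set \<Rightarrow> 'b set set \<Rightarrow> ('a \<Rightarrow> 'b set) \<Rightarrow> bool" where
  "hom_cell VG EG VH EH \<eta> \<longleftrightarrow>
     (\<forall>v\<in>VG. \<eta> v \<noteq> {} \<and> \<eta> v \<subseteq> VH) \<and> (\<forall>v. v \<notin> VG \<longrightarrow> \<eta> v = {}) \<and>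
     (\<forall>x y. {x, y} \<in> EG \<longrightarrow> (\<forall>a\<in>\<eta> x. \<forall>b\<in>\<eta> y. {a, b} \<in> EH))"

definition hom_complex :: "'a set \<Rightarrow> 'a set set \<Rightarrow> 'b set \<Rightarrow> 'b set set \<Rightarrow> ('a \<Rightarrow> 'b set) set" where
  "hom_complex VG EG VH EH = {\<eta>. hom_cell VG EG VH EH \<eta>}"

definition zero_cell :: "'a set \<Rightarrow> 'a set set \<Rightarrow> 'b set \<Rightarrow> 'b set set \<Rightarrow> ('a \<Rightarrow> 'b set) \<Rightarrow> bool" where
  "zero_cell VG EG VH EH \<eta> \<longleftrightarrow> hom_cell VG EG VH EH \<eta> \<and> (\<forall>v\<in>VG. \<exists>b. \<eta> v = {b})"

definition face_rel :: "'a set \<Rightarrow> 'a set set \<Rightarrow> 'b set \<Rightarrow> 'b set set \<Rightarrow> (('a \<Rightarrow> 'b set) \<times> ('a \<Rightarrow> 'b set)) set" where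
  "face_rel VG EG VH EH = {(\<eta>, \<tau>). \<eta> \<in> hom_complex VG EG VH EH \<and> \<tau> \<in> hom_complex VG EG VH EH
      \<and> (\<forall>v. \<eta> v \<subseteq> \<tau> v)}"

text \<open>Two cells lie in the same path component of the (realization of the) complex
  iff they are joined by a zigzag of face relations.\<close>
definition same_component :: "'a set \<Rightarrow> 'a set set \<Rightarrow> 'b set \<Rightarrow> 'b set set \<Rightarrow> ('a \<Rightarrow> 'b set) \<Rightarrow> ('a \<Rightarrow> 'b set) \<Rightarrow> bool" where
  "same_component VG EG VH EH \<eta> \<tau> \<longleftrightarrow>
     \<eta> \<in> hom_complex VG EG VH EH \<and> \<tau> \<in> hom_complex VG EG VH EH \<and>
     (\<eta>, \<tau>) \<in> (face_rel VG EG VH EH \<union> (face_rel VG EG VH EH)\<inverse>)\<^sup>*"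

definition hom_disconnected :: "'a set \<Rightarrow> 'a set set \<Rightarrow> 'b set \<Rightarrow> 'b set set \<Rightarrow> bool" where
  "hom_disconnected VG EG VH EH \<longleftrightarrow> hom_complex VG EG VH EH \<noteq> {} \<and>
     (\<exists>\<eta> \<tau>. \<eta> \<in> hom_complex VG EG VH EH \<and> \<tau> \<in> hom_complex VG EG VH EH \<and>
        \<not> same_component VG EG VH EH \<eta> \<tau>)"

definition restrict_cell :: "('a \<Rightarrow> 'b set) \<Rightarrow> 'a set \<Rightarrow> ('a \<Rightarrow> 'b set)" where
  "restrict_cell \<eta> V = (\<lambda>v. if v \<in> V then \<eta> v else {})"

end

theory Submission
  imports Defs
begin

text \<open>Restriction to \<open>V(G)\<close> is an order-preserving map from the face poset of \<open>Hom(G',H)\<close> to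
  that of \<open>Hom(G,H)\<close>, so it maps each path component into a single path component. Extensions
  of \<open>\<eta>\<^sub>1\<close> and \<open>\<eta>\<^sub>2\<close> lying in a common component would therefore put \<open>\<eta>\<^sub>1\<close> and \<open>\<eta>\<^sub>2\<close>
  themselves in a common component.\<close>

lemma hom_cell_restrict_cell:
  assumes "subgraph VG EG VG' EG'" and "hom_cell VG' EG' VH EH \<eta>"
  shows "hom_cell VG EG VH EH (restrict_cell \<eta> VG)"
  using assms unfolding subgraph_def hom_cell_def restrict_cell_def
  by (auto; metis insert_commute insert_subset subsetD)

lemma face_rel_restrict_cell:
  assumes "subgraph VG EG VG' EG'" and "(\<eta>, \<tau>) \<in> face_rel VG' EG' VH EH"
  shows "(restrict_cell \<eta> VG, restrict_cell \<tau> VG) \<in> face_rel VG EG VH EH"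
  using assms(2) hom_cell_restrict_cell[OF assms(1)]
  unfolding face_rel_def hom_complex_def restrict_cell_def
  by auto

lemma same_component_restrict_cell:
  assumes "subgraph VG EG VG' EG'" and "same_component VG' EG' VH EH \<eta> \<tau>"
  shows "same_component VG EG VH EH (restrict_cell \<eta> VG) (restrict_cell \<tau> VG)"
proof -
  let ?R = "\<lambda>VG EG. face_rel VG EG VH EH \<union> (face_rel VG EG VH EH)\<inverse>"
  have "(\<eta>, \<tau>) \<in> (?R VG' EG')\<^sup>*"
    using assms(2) unfolding same_component_def by blast
  then have "(restrict_cell \<eta> VG, restrict_cell \<tau> VG) \<in> (?R VG EG)\<^sup>*"
  proof (induction rule: rtrancl_induct)
    case base
    then show ?case by simp
  next
    case (step \<sigma> \<rho>)
    then have "(restrict_cell \<sigma> VG, restrict_cell \<rho> VG) \<in> ?R VG EG"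
      using face_rel_restrict_cell[OF assms(1)] by blast
    with step.IH show ?case by (rule rtrancl_into_rtrancl)
  qed
  moreover have "restrict_cell \<eta> VG \<in> hom_complex VG EG VH EH"
    and "restrict_cell \<tau> VG \<in> hom_complex VG EG VH EH"
    using assms hom_cell_restrict_cell unfolding same_component_def hom_complex_def by blast+
  ultimately show ?thesis unfolding same_component_def by blast
qed

theorem lemma4p2:
  fixes VG VG' :: "'a set" and EG EG' :: "'a set set"
    and VH :: "'b set" and EH :: "'b set set"
    and \<eta>1 \<eta>2 \<eta>1' \<eta>2' :: "'a \<Rightarrow> 'b set"
  assumes "simple_graph VG EG" and "simple_graph VG' EG'" and "simple_graph VH EH"
    and "subgraph VG EG VG' EG'"
    and "hom_disconnected VG EG VH EH"
    and "zero_cell VG EG VH EH \<eta>1" and "zero_cell VG EG VH EH \<eta>2"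
    and "\<not> same_component VG EG VH EH \<eta>1 \<eta>2"
    and "\<eta>1' \<in> hom_complex VG' EG' VH EH" and "\<eta>2' \<in> hom_complex VG' EG' VH EH"
    and "restrict_cell \<eta>1' VG = \<eta>1" and "restrict_cell \<eta>2' VG = \<eta>2"
  shows "hom_disconnected VG' EG' VH EH"
proof -
  have "\<not> same_component VG' EG' VH EH \<eta>1' \<eta>2'"
    using same_component_restrict_cell[OF assms(4)] assms(8,11,12) by blast
  with assms(9,10) show ?thesis unfolding hom_disconnected_def by blast
qed

end
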